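(* Let $\mathcal D=\{A_\lambda\}_{\lambda\in\Lambda}$ be a finite family of subsets of some set, with a decomposition $\Lambda=\Lambda_0\sqcup\Lambda_1\sqcup\dots\sqcup\Lambda_n$ (sets $A_\lambda$ with $\lambda\in\Lambda_r$ are said to have type $r$). Assume: (1) for any $A_{\lambda_1},A_{\lambda_2}\in\mathcal D$ of types $r_1,r_2$, $A_{\lambda_1}\cap A_{\lambda_2}$ is a finite union of sets from $\mathcal D$ of types at most $\min\{r_1,r_2\}$; (2) if $\lambda_1\ne\lambda_2$ and $A_{\lambda_1},A_{\lambda_2}$ have the same type $r$, then $A_{\lambda_1}\cap A_{\lambda_2}$ is a finite union of sets from $\mathcal D$ of types strictly less than $r$; (3) every finite union $X$ of elements of $\mathcal D$ has a unique reduced presentation $X=\bigcup_{j=1}^sA_{\lambda_j}$, i.e. one in which no $A_{\lambda_j}$ is contained in another $A_{\lambda_k}$. Let $\mathcal T$ be the family of all finite unions of elements of $\mathcal D$, and let $m:\Lambda\to\mathbb{C}$ be any function. Then there exists a unique function $\mu:\mathcal T\to\mathbb{C}$ with $\mu(A\cup B)=\mu(A)+\mu(B)-\mu(A\cap B)$ for all $A,B\in\mathcal T$ and $\mu(A_\lambda)=m(\lambda)$ for all $\lambda\in\Lambda$. *)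

theory Defs
  imports Complex_Main "HOL-Library.FuncSet"
begin

text \<open>The family D = {A l}, l in Lam. T = all finite unions of members of D
  (the empty union, i.e. the empty set, included).\<close>
definition fin_unions :: "('i \<Rightarrow> 'a set) \<Rightarrow> 'i set \<Rightarrow> 'a set set" where
  "fin_unions A Lam = {\<Union>(A ` S) | S. finite S \<and> S \<subseteq> Lam}"

definition union_of_types :: "('i \<Rightarrow> 'a set) \<Rightarrow> 'i set \<Rightarrow> ('i \<Rightarrow> nat) \<Rightarrow> (nat \<Rightarrow> bool) \<Rightarrow> 'a set \<Rightarrow> bool" where
  "union_of_types A Lam ty P X \<longleftrightarrow>
     (\<exists>S. finite S \<and> S \<subseteq> Lam \<and> (\<forall>l\<in>S. P (ty l)) \<and> X = \<Union>(A ` S))"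

definition reduced_presentation :: "('i \<Rightarrow> 'a set) \<Rightarrow> 'i set \<Rightarrow> 'i set \<Rightarrow> 'a set \<Rightarrow> bool" where
  "reduced_presentation A Lam S X \<longleftrightarrow>
     finite S \<and> S \<subseteq> Lam \<and> X = \<Union>(A ` S) \<and>
     (\<forall>j\<in>S. \<forall>k\<in>S. j \<noteq> k \<longrightarrow> \<not> A j \<subseteq> A k)"

end

theory Submission
  imports Defs
begin

definition modular_on :: "'a set set \<Rightarrow> ('a set \<Rightarrow> 'b::ab_group_add) \<Rightarrow> bool" where
  "modular_on T \<mu> \<longleftrightarrow> (\<forall>B\<in>T. \<forall>C\<in>T. \<mu> (B \<union> C) = \<mu> B + \<mu> C - \<mu> (B \<inter> C))"

definition indices_below :: "('i \<Rightarrow> 'a set) \<Rightarrow> 'i set \<Rightarrow> 'a set \<Rightarrow> 'i set" where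
  "indices_below A Lam X = {k\<in>Lam. A k \<subseteq> X}"

lemma finite_indices_below: "finite Lam \<Longrightarrow> finite (indices_below A Lam X)"
  unfolding indices_below_def by simp

lemma indices_below_mono: "X \<subseteq> Y \<Longrightarrow> indices_below A Lam X \<subseteq> indices_below A Lam Y"
  unfolding indices_below_def by auto

lemma indices_below_Int:
  "indices_below A Lam (B \<inter> C) = indices_below A Lam B \<inter> indices_below A Lam C"
  unfolding indices_below_def by auto

lemma fin_unions_iff: "X \<in> fin_unions A Lam \<longleftrightarrow> (\<exists>S. finite S \<and> S \<subseteq> Lam \<and> X = \<Union>(A ` S))"
  unfolding fin_unions_def by blast

lemma empty_in_fin_unions: "{} \<in> fin_unions A Lam"
  unfolding fin_unions_iff by (intro exI[of _ "{}"]) auto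

lemma A_in_fin_unions: "l \<in> Lam \<Longrightarrow> A l \<in> fin_unions A Lam"
  unfolding fin_unions_iff by (intro exI[of _ "{l}"]) auto

lemma Un_in_fin_unions:
  assumes "B \<in> fin_unions A Lam" and "C \<in> fin_unions A Lam"
  shows "B \<union> C \<in> fin_unions A Lam"
proof -
  obtain S1 S2 where "finite S1" "S1 \<subseteq> Lam" "B = \<Union>(A ` S1)" "finite S2" "S2 \<subseteq> Lam" "C = \<Union>(A ` S2)"
    using assms unfolding fin_unions_iff by blast
  then show ?thesis
    unfolding fin_unions_iff by (intro exI[of _ "S1 \<union> S2"]) auto
qed

lemma UN_in_fin_unions:
  "finite I \<Longrightarrow> (\<And>i. i \<in> I \<Longrightarrow> X i \<in> fin_unions A Lam) \<Longrightarrow> (\<Union>i\<in>I. X i) \<in> fin_unions A Lam"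
  by (induction I rule: finite_induct) (auto intro: empty_in_fin_unions Un_in_fin_unions)

lemma union_of_types_in_fin_unions: "union_of_types A Lam ty P X \<Longrightarrow> X \<in> fin_unions A Lam"
  unfolding union_of_types_def fin_unions_iff by blast

lemma reduced_presentation_maximal:
  assumes "finite S" "S \<subseteq> Lam" "inj_on A Lam"
  shows "reduced_presentation A Lam {i\<in>S. \<not> (\<exists>j\<in>S. A i \<subset> A j)} (\<Union>(A ` S))"
proof -
  let ?S' = "{i\<in>S. \<not> (\<exists>j\<in>S. A i \<subset> A j)}"
  have "\<exists>j\<in>?S'. A i \<subseteq> A j" if "i \<in> S" for i
  proof -
    obtain M where M: "M \<in> A ` S" "A i \<subseteq> M" "\<forall>B\<in>A ` S. M \<subseteq> B \<longrightarrow> M = B"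
      using finite_has_maximal2[of "A ` S" "A i"] \<open>finite S\<close> \<open>i \<in> S\<close> by auto
    then obtain j where "j \<in> S" "M = A j" by blast
    have "\<not> A j \<subset> A j'" if "j' \<in> S" for j'
      using M(3) that \<open>M = A j\<close> by blast
    then have "j \<in> ?S'" using \<open>j \<in> S\<close> by blast
    then show ?thesis using M(2) \<open>M = A j\<close> by blast
  qed
  then have "\<Union>(A ` S) = \<Union>(A ` ?S')" by blast
  moreover have "\<not> A i \<subseteq> A j" if "i \<in> ?S'" "j \<in> ?S'" "i \<noteq> j" for i j
  proof
    assume "A i \<subseteq> A j"
    moreover have "A i \<noteq> A j"
      using inj_onD[OF \<open>inj_on A Lam\<close>] \<open>S \<subseteq> Lam\<close> that by blast
    ultimately show False using that by blast
  qed
  ultimately show ?thesis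
    using assms(1,2) unfolding reduced_presentation_def by auto
qed

lemma moebius_inversion_exists:
  fixes m :: "'i \<Rightarrow> 'b::ab_group_add"
  assumes "finite Lam" and "inj_on A Lam"
  shows "\<exists>f. \<forall>l\<in>Lam. (\<Sum>k\<in>indices_below A Lam (A l). f k) = m l"
proof -
  let ?strictly_below = "\<lambda>l. {k\<in>Lam. A k \<subset> A l}"
  define f where "f = wfrec (measure (\<lambda>l. card (?strictly_below l)))
    (\<lambda>f l. m l - (\<Sum>k\<in>?strictly_below l. f k))"
  have f_eq: "f l = m l - (\<Sum>k\<in>?strictly_below l. f k)" for l
  proof -
    have "card (?strictly_below k) < card (?strictly_below l)" if "k \<in> ?strictly_below l" for k
      using that \<open>finite Lam\<close> by (intro psubset_card_mono) auto
    then show ?thesis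
      by (subst def_wfrec[OF f_def[THEN eq_reflection] wf_measure]) (simp add: cut_apply)
  qed
  have "indices_below A Lam (A l) = insert l (?strictly_below l)" if "l \<in> Lam" for l
    using \<open>inj_on A Lam\<close> that unfolding indices_below_def by (auto dest: inj_onD)
  then have "(\<Sum>k\<in>indices_below A Lam (A l). f k) = m l" if "l \<in> Lam" for l
    using that \<open>finite Lam\<close> f_eq[of l] by simp
  then show ?thesis by blast
qed

locale unique_reduced_presentations =
  fixes A :: "'i \<Rightarrow> 'a set" and Lam :: "'i set"
  assumes unique_reduced: "X \<in> fin_unions A Lam \<Longrightarrow> \<exists>!S. reduced_presentation A Lam S X"
begin

abbreviation T where "T \<equiv> fin_unions A Lam"

abbreviation below where "below \<equiv> indices_below A Lam"

lemma reduced_presentation_unique: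
  assumes "X \<in> T" "reduced_presentation A Lam S X" "reduced_presentation A Lam S' X"
  shows "S = S'"
  using unique_reduced[OF assms(1)] assms(2,3) by (elim ex1E) blast

lemma reduced_presentation_singleton: "l \<in> Lam \<Longrightarrow> reduced_presentation A Lam {l} (A l)"
  unfolding reduced_presentation_def by auto

lemma inj_on_A: "inj_on A Lam"
proof (rule inj_onI)
  fix k l assume "k \<in> Lam" "l \<in> Lam" "A k = A l"
  then have "reduced_presentation A Lam {k} (A l)"
    using reduced_presentation_singleton[OF \<open>k \<in> Lam\<close>] by simp
  then have "{l} = {k}"
    by (rule reduced_presentation_unique[OF A_in_fin_unions[OF \<open>l \<in> Lam\<close>]
          reduced_presentation_singleton[OF \<open>l \<in> Lam\<close>]])
  then show "k = l" by simp
qed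

lemma A_nonempty:
  assumes "l \<in> Lam"
  shows "A l \<noteq> {}"
proof
  assume "A l = {}"
  then have "reduced_presentation A Lam {l} {}"
    using reduced_presentation_singleton[OF \<open>l \<in> Lam\<close>] by simp
  moreover have "reduced_presentation A Lam {} {}"
    unfolding reduced_presentation_def by simp
  ultimately have "{l} = {}"
    by (rule reduced_presentation_unique[OF empty_in_fin_unions])
  then show False by simp
qed

lemma A_eq_Union_imp_mem:
  assumes "k \<in> Lam" "finite S" "S \<subseteq> Lam" "A k = \<Union>(A ` S)"
  shows "k \<in> S"
proof -
  have "reduced_presentation A Lam {i\<in>S. \<not> (\<exists>j\<in>S. A i \<subset> A j)} (A k)"
    using reduced_presentation_maximal[OF \<open>finite S\<close> \<open>S \<subseteq> Lam\<close> inj_on_A] unfolding assms(4) .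
  then have "{k} = {i\<in>S. \<not> (\<exists>j\<in>S. A i \<subset> A j)}"
    by (rule reduced_presentation_unique[OF A_in_fin_unions[OF \<open>k \<in> Lam\<close>]
          reduced_presentation_singleton[OF \<open>k \<in> Lam\<close>]])
  then show ?thesis by blast
qed

end

locale Int_closed_unique_presentations = unique_reduced_presentations A Lam
  for A :: "'i \<Rightarrow> 'a set" and Lam :: "'i set" +
  assumes Int_A_in_fin_unions: "k \<in> Lam \<Longrightarrow> l \<in> Lam \<Longrightarrow> A k \<inter> A l \<in> fin_unions A Lam"
begin

lemma Int_in_fin_unions:
  assumes "B \<in> T" "C \<in> T"
  shows "B \<inter> C \<in> T"
proof -
  obtain S1 S2 where "finite S1" "S1 \<subseteq> Lam" "B = \<Union>(A ` S1)" "finite S2" "S2 \<subseteq> Lam" "C = \<Union>(A ` S2)"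
    using assms unfolding fin_unions_iff by blast
  then have "B \<inter> C = (\<Union>i\<in>S1. \<Union>j\<in>S2. A i \<inter> A j)" by blast
  also have "\<dots> \<in> T"
    using \<open>finite S1\<close> \<open>finite S2\<close> \<open>S1 \<subseteq> Lam\<close> \<open>S2 \<subseteq> Lam\<close>
    by (intro UN_in_fin_unions Int_A_in_fin_unions) auto
  finally show ?thesis .
qed

lemma modular_on_restrict:
  assumes "modular_on T \<mu>"
  shows "modular_on T (restrict \<mu> T)"
  unfolding modular_on_def
proof (intro ballI)
  fix B C assume "B \<in> T" "C \<in> T"
  then show "restrict \<mu> T (B \<union> C) = restrict \<mu> T B + restrict \<mu> T C - restrict \<mu> T (B \<inter> C)"
    using assms Un_in_fin_unions[OF \<open>B \<in> T\<close> \<open>C \<in> T\<close>] Int_in_fin_unions[OF \<open>B \<in> T\<close> \<open>C \<in> T\<close>]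
    unfolding modular_on_def by simp
qed

lemma subset_Union_imp_subset:
  assumes "k \<in> Lam" "finite S" "S \<subseteq> Lam" "A k \<subseteq> \<Union>(A ` S)"
  shows "\<exists>j\<in>S. A k \<subseteq> A j"
proof -
  have "\<forall>j\<in>S. \<exists>P. finite P \<and> P \<subseteq> Lam \<and> A k \<inter> A j = \<Union>(A ` P)"
    using Int_A_in_fin_unions \<open>k \<in> Lam\<close> \<open>S \<subseteq> Lam\<close> unfolding fin_unions_iff by blast
  then obtain P where P: "\<And>j. j \<in> S \<Longrightarrow> finite (P j) \<and> P j \<subseteq> Lam \<and> A k \<inter> A j = \<Union>(A ` P j)"
    by metis
  have "A k = (\<Union>j\<in>S. A k \<inter> A j)" using \<open>A k \<subseteq> \<Union>(A ` S)\<close> by blast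
  also have "\<dots> = \<Union>(A ` (\<Union>j\<in>S. P j))" using P by auto
  finally have A_k_eq: "A k = \<Union>(A ` (\<Union>j\<in>S. P j))" .
  have "finite (\<Union>j\<in>S. P j)" "(\<Union>j\<in>S. P j) \<subseteq> Lam"
    using P \<open>finite S\<close> by auto
  then have "k \<in> (\<Union>j\<in>S. P j)"
    by (rule A_eq_Union_imp_mem[OF \<open>k \<in> Lam\<close> _ _ A_k_eq])
  then obtain j where "j \<in> S" "k \<in> P j" by blast
  then have "A k \<subseteq> A k \<inter> A j" using P by blast
  then show ?thesis using \<open>j \<in> S\<close> by blast
qed

lemma indices_below_Un:
  assumes "B \<in> T" "C \<in> T"
  shows "below (B \<union> C) = below B \<union> below C"
proof -
  obtain S1 S2 where S: "finite S1" "S1 \<subseteq> Lam" "B = \<Union>(A ` S1)" "finite S2" "S2 \<subseteq> Lam" "C = \<Union>(A ` S2)"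
    using assms unfolding fin_unions_iff by blast
  have "A k \<subseteq> B \<or> A k \<subseteq> C" if "k \<in> Lam" "A k \<subseteq> B \<union> C" for k
  proof -
    have "A k \<subseteq> \<Union>(A ` (S1 \<union> S2))" "finite (S1 \<union> S2)" "S1 \<union> S2 \<subseteq> Lam"
      using S that(2) by auto
    then obtain j where "j \<in> S1 \<union> S2" "A k \<subseteq> A j"
      using subset_Union_imp_subset[OF \<open>k \<in> Lam\<close>] by blast
    moreover have "A j \<subseteq> B" if "j \<in> S1" for j
      using S(3) that by blast
    moreover have "A j \<subseteq> C" if "j \<in> S2" for j
      using S(6) that by blast
    ultimately show ?thesis by blast
  qed
  then show ?thesis unfolding indices_below_def by auto
qed

lemma split_off_generator:
  assumes "X \<in> T" "X \<noteq> {}"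
  obtains l Y where "l \<in> Lam" "Y \<in> T" "X = A l \<union> Y" "\<not> A l \<subseteq> Y"
proof -
  obtain S where S: "reduced_presentation A Lam S X"
    using unique_reduced[OF \<open>X \<in> T\<close>] by blast
  then obtain l where "l \<in> S" using \<open>X \<noteq> {}\<close> unfolding reduced_presentation_def by blast
  let ?Y = "\<Union>(A ` (S - {l}))"
  have "finite S" "S \<subseteq> Lam" "X = \<Union>(A ` S)"
    using S unfolding reduced_presentation_def by auto
  then have "l \<in> Lam" "X = A l \<union> ?Y"
    using \<open>l \<in> S\<close> by auto
  moreover have "?Y \<in> T"
    using \<open>finite S\<close> \<open>S \<subseteq> Lam\<close> unfolding fin_unions_iff by (intro exI[of _ "S - {l}"]) auto
  moreover have "\<not> A l \<subseteq> ?Y"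
  proof
    assume "A l \<subseteq> ?Y"
    moreover have "finite (S - {l})" "S - {l} \<subseteq> Lam"
      using \<open>finite S\<close> \<open>S \<subseteq> Lam\<close> by auto
    ultimately obtain j where "j \<in> S - {l}" "A l \<subseteq> A j"
      using subset_Union_imp_subset[OF \<open>l \<in> Lam\<close>] by blast
    then show False
      using S \<open>l \<in> S\<close> unfolding reduced_presentation_def by (metis DiffD1 DiffD2 singletonI)
  qed
  ultimately show ?thesis using that by blast
qed

end

locale finite_Int_closed_unique_presentations = Int_closed_unique_presentations A Lam
  for A :: "'i \<Rightarrow> 'a set" and Lam :: "'i set" +
  assumes finite_Lam: "finite Lam"
begin

lemma modular_on_sum_below: "modular_on T (\<lambda>X. \<Sum>k\<in>below X. f k)"
  unfolding modular_on_def
proof (intro ballI)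
  fix B C assume "B \<in> T" "C \<in> T"
  have "(\<Sum>k\<in>below (B \<union> C). f k) + (\<Sum>k\<in>below (B \<inter> C). f k)
      = (\<Sum>k\<in>below B. f k) + (\<Sum>k\<in>below C. f k)"
    unfolding indices_below_Un[OF \<open>B \<in> T\<close> \<open>C \<in> T\<close>] indices_below_Int
    by (intro sum.union_inter finite_indices_below finite_Lam)
  then show "(\<Sum>k\<in>below (B \<union> C). f k)
      = (\<Sum>k\<in>below B. f k) + (\<Sum>k\<in>below C. f k) - (\<Sum>k\<in>below (B \<inter> C). f k)"
    by (metis add_diff_cancel)
qed

lemma modular_extension_exists:
  fixes m :: "'i \<Rightarrow> 'b::ab_group_add"
  shows "\<exists>\<mu>. modular_on T \<mu> \<and> \<mu> {} = 0 \<and> (\<forall>l\<in>Lam. \<mu> (A l) = m l)"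
proof -
  obtain f where f: "\<forall>l\<in>Lam. (\<Sum>k\<in>below (A l). f k) = m l"
    using moebius_inversion_exists[OF finite_Lam inj_on_A] by blast
  have "below {} = {}"
    using A_nonempty unfolding indices_below_def by auto
  then have "(\<Sum>k\<in>below {}. f k) = 0" by simp
  then show ?thesis
    using modular_on_sum_below f by blast
qed

lemma modular_on_eq_0:
  fixes \<mu> :: "'a set \<Rightarrow> 'b::ab_group_add"
  assumes "modular_on T \<mu>" "\<mu> {} = 0" "\<forall>l\<in>Lam. \<mu> (A l) = 0" "X \<in> T"
  shows "\<mu> X = 0"
  using \<open>X \<in> T\<close>
proof (induction "card (below X)" arbitrary: X rule: less_induct)
  case less
  show ?case
  proof (cases "X = {}")
    case True
    then show ?thesis using \<open>\<mu> {} = 0\<close> by simp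
  next
    case False
    then obtain l Y where "l \<in> Lam" "Y \<in> T" "X = A l \<union> Y" "\<not> A l \<subseteq> Y"
      using split_off_generator[OF \<open>X \<in> T\<close>] by blast
    have below_psubset: "below Z \<subset> below X" if "Z \<subseteq> Y" for Z
    proof -
      have "l \<in> below X" "l \<notin> below Z"
        using \<open>l \<in> Lam\<close> \<open>X = A l \<union> Y\<close> \<open>\<not> A l \<subseteq> Y\<close> that unfolding indices_below_def by auto
      moreover have "below Z \<subseteq> below X"
        using \<open>X = A l \<union> Y\<close> that by (intro indices_below_mono) auto
      ultimately show ?thesis by blast
    qed
    have "card (below Y) < card (below X)"
      by (intro psubset_card_mono finite_indices_below finite_Lam below_psubset order_refl)
    then have "\<mu> Y = 0" using less.hyps \<open>Y \<in> T\<close> by blast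
    have "card (below (A l \<inter> Y)) < card (below X)"
      by (intro psubset_card_mono finite_indices_below finite_Lam below_psubset Int_lower2)
    moreover have "A l \<inter> Y \<in> T"
      using Int_in_fin_unions[OF A_in_fin_unions[OF \<open>l \<in> Lam\<close>] \<open>Y \<in> T\<close>] .
    ultimately have "\<mu> (A l \<inter> Y) = 0" using less.hyps by blast
    have "\<mu> X = \<mu> (A l) + \<mu> Y - \<mu> (A l \<inter> Y)"
      using \<open>modular_on T \<mu>\<close> A_in_fin_unions[OF \<open>l \<in> Lam\<close>] \<open>Y \<in> T\<close> \<open>X = A l \<union> Y\<close>
      unfolding modular_on_def by blast
    then show ?thesis
      using assms(3) \<open>l \<in> Lam\<close> \<open>\<mu> Y = 0\<close> \<open>\<mu> (A l \<inter> Y) = 0\<close> by simp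
  qed
qed

lemma modular_on_eqI:
  fixes \<mu> \<nu> :: "'a set \<Rightarrow> 'b::ab_group_add"
  assumes "modular_on T \<mu>" "modular_on T \<nu>" "\<mu> {} = \<nu> {}" "\<forall>l\<in>Lam. \<mu> (A l) = \<nu> (A l)" "X \<in> T"
  shows "\<mu> X = \<nu> X"
proof -
  have "modular_on T (\<lambda>X. \<mu> X - \<nu> X)"
    unfolding modular_on_def
  proof (intro ballI)
    fix B C assume "B \<in> T" "C \<in> T"
    then have "\<mu> (B \<union> C) = \<mu> B + \<mu> C - \<mu> (B \<inter> C)" "\<nu> (B \<union> C) = \<nu> B + \<nu> C - \<nu> (B \<inter> C)"
      using assms(1,2) unfolding modular_on_def by blast+
    then show "\<mu> (B \<union> C) - \<nu> (B \<union> C) = \<mu> B - \<nu> B + (\<mu> C - \<nu> C) - (\<mu> (B \<inter> C) - \<nu> (B \<inter> C))"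
      by (simp add: algebra_simps)
  qed
  then have "\<mu> X - \<nu> X = 0"
    by (rule modular_on_eq_0) (use assms(3-5) in auto)
  then show ?thesis by simp
qed

end

theorem lemma2p2p2:
  fixes A :: "'i \<Rightarrow> 'a set" and Lam :: "'i set" and ty :: "'i \<Rightarrow> nat"
    and n :: nat and m :: "'i \<Rightarrow> complex"
  assumes fin: "finite Lam"
    and types: "\<forall>l\<in>Lam. ty l \<le> n"
    and cond1: "\<forall>l1\<in>Lam. \<forall>l2\<in>Lam.
        union_of_types A Lam ty (\<lambda>r. r \<le> min (ty l1) (ty l2)) (A l1 \<inter> A l2)"
    and cond2: "\<forall>l1\<in>Lam. \<forall>l2\<in>Lam. l1 \<noteq> l2 \<and> ty l1 = ty l2 \<longrightarrow>
        union_of_types A Lam ty (\<lambda>r. r < ty l1) (A l1 \<inter> A l2)"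
    and cond3: "\<forall>X\<in>fin_unions A Lam. \<exists>!S. reduced_presentation A Lam S X"
  shows "\<exists>!\<mu>. \<mu> \<in> fin_unions A Lam \<rightarrow>\<^sub>E (UNIV :: complex set) \<and>
           \<mu> {} = 0 \<and>
           (\<forall>B\<in>fin_unions A Lam. \<forall>C\<in>fin_unions A Lam.
              \<mu> (B \<union> C) = \<mu> B + \<mu> C - \<mu> (B \<inter> C)) \<and>
           (\<forall>l\<in>Lam. \<mu> (A l) = m l)"
proof -
  interpret finite_Int_closed_unique_presentations A Lam
  proof
    show "\<exists>!S. reduced_presentation A Lam S X" if "X \<in> fin_unions A Lam" for X
      using cond3 that by simp
    show "A k \<inter> A l \<in> fin_unions A Lam" if "k \<in> Lam" "l \<in> Lam" for k l
      using union_of_types_in_fin_unions cond1 that by blast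
  qed (rule fin)
  obtain \<mu> :: "'a set \<Rightarrow> complex" where \<mu>: "modular_on T \<mu>" "\<mu> {} = 0" "\<forall>l\<in>Lam. \<mu> (A l) = m l"
    using modular_extension_exists[of m] by blast
  have "modular_on T (restrict \<mu> T)"
    using modular_on_restrict[OF \<mu>(1)] .
  moreover have \<mu>_restrict: "restrict \<mu> T \<in> T \<rightarrow>\<^sub>E UNIV" "restrict \<mu> T {} = 0"
    "\<forall>l\<in>Lam. restrict \<mu> T (A l) = m l"
    using \<mu>(2,3) by (simp_all add: empty_in_fin_unions A_in_fin_unions)
  moreover have "\<nu> = restrict \<mu> T"
    if "\<nu> \<in> T \<rightarrow>\<^sub>E UNIV" "\<nu> {} = 0" "modular_on T \<nu>" "\<forall>l\<in>Lam. \<nu> (A l) = m l" for \<nu>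
  proof (rule PiE_ext[OF that(1) \<mu>_restrict(1)])
    fix X assume "X \<in> T"
    show "\<nu> X = restrict \<mu> T X"
      by (rule modular_on_eqI[OF that(3) \<open>modular_on T (restrict \<mu> T)\<close> _ _ \<open>X \<in> T\<close>])
        (use that(2,4) \<mu>_restrict(2,3) in simp_all)
  qed
  ultimately show ?thesis
    unfolding modular_on_def by (intro ex1I[of _ "restrict \<mu> T"]) blast+
qed

end
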